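(* Let $\mathcal{T}$ be an MPQ-tree of an interval graph $G=(V,E)$, let $(x,y)\in E$ with $x$ over $y$ and $node(x)\neq node(y)$, and suppose the $\langle x,y\rangle$-tree-path is almost rotable and starts in a central section $S_a$ of the Q-node $node(x)$, whose sections are $S_1,\dots,S_k$. Suppose $y$ has no neighbour in $V_a\setminus\{y\}$ (the vertex set of the subtree $T_a$), and at least one of the following holds: (1) there is $b$ with $1<b\le l(x)$ such that $S_a\setminus\{x\}\subseteq S_b$ and $S_{b-1}\cap S_b\subseteq S_a$; (2) there is $b$ with $r(x)\le b<k$ such that $S_a\setminus\{x\}\subseteq S_b$ and $S_b\cap S_{b+1}\subseteq S_a$; (3) $S_a\setminus\{x\}\subseteq S_1$; (4) $S_a\setminus\{x\}\subseteq S_k$. Then $(x,y)$ is an interval edge.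
   Context: Graphs are finite and simple; for $G=(V,E)$ and $e\in E$, $G-e=(V,E\setminus\{e\})$. An edge $(x,y)\in E$ of an interval graph $G$ is an interval edge if $G-(x,y)$ is an interval graph. An MPQ-tree of an interval graph $G=(V,E)$, $V=\{1,\dots,n\}$, is a rooted plane tree whose nodes are P-nodes and Q-nodes. Each P-node carries a (possibly empty) set of vertices. A Q-node has $k\ge 3$ ordered positions $1,\dots,k$; position $i$ carries a set $S_i\subseteq V$ (the $i$-th section) and a child subtree $T_i$, which may be empty. Every vertex $v$ is assigned to exactly one node $node(v)$: either $v$ lies in the set of the P-node $node(v)$, or $node(v)$ is a Q-node and $v$ lies exactly in the sections $S_{l(v)},\dots,S_{r(v)}$ of it, with $l(v)<r(v)$. For a node with child subtrees $T_1,\dots,T_k$, $V_i$ denotes the set of vertices assigned to nodes of $T_i$ ($V_i=\emptyset$ if $T_i$ is empty). The maximal cliques of $G$ are in bijection with the descending paths from the root which at a P-node continue into one of its children (stopping if there is none) and at a Q-node choose a position $i$ and continue into $T_i$ (stopping if $T_i$ is empty); the clique is the union of the sets of the visited P-nodes and the chosen sections. Reading these cliques left to right gives a linear order of the maximal cliques, and the orders obtained this way after arbitrarily permuting children of P-nodes and reversing the positions of Q-nodes are exactly the orders of the maximal cliques of $G$ in which the cliques containing any fixed vertex are consecutive. Moreover, for every Q-node with sections $S_1,\dots,S_k$: (a) $V_1\neq\emptyset$ and $V_k\ne\emptyset$; (b) $S_1\subseteq S_2$ and $S_k\subseteq S_{k-1}$; (c) $S_{i-1}\cap S_i\neq\emptyset$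 for $2\le i\le k$; (d) $S_{i-1}\neq S_i$ for $2\le i\le k$; (e) $(S_i\cap S_{i+1})\setminus S_1\neq\emptyset$ and $(S_{i-1}\cap S_i)\setminus S_k\neq\emptyset$ for $2\le i\le k-1$; (f) $(S_{i-1}\cup V_{i-1})\setminus S_i\neq\emptyset$ and $(S_i\cup V_i)\setminus S_{i-1}\neq\emptyset$ for $2\le i\le k$; and further (g) no empty P-node has an empty P-node as its parent, (h) no P-node has exactly one child whose root is a P-node, (i) every child subtree of a P-node is nonempty. We say $x$ is over $y$ if $node(x)$ is the lowest common ancestor of $node(x)$ and $node(y)$ in $\mathcal{T}$. For $x$ over $y$ with $node(x)\ne node(y)$, the $\langle x,y\rangle$-tree-path is the tree path $node(x)=n_1,n_2,\dots,n_t=node(y)$. For a Q-node with sections $S_1,\dots,S_k$, section $S_a$ is central if $1<a<k$, and for a vertex $v$ of that Q-node it is $v$-central if $l(v)<a<r(v)$ and $v$-non-central if $a\in\{l(v),r(v)\}$. The path goes through a central section if for some $1<i<t$, $n_i$ is a Q-node and $n_{i+1}$ lies in the subtree $T_a$ of a central section $S_a$ of $n_i$. The path starts in a central (resp. non-central) section $S_a$ if $n_1$ is a Q-node and $n_2$ lies in the subtree $T_a$ where $S_a$ is an $x$-central (resp. $x$-non-central) section of $n_1$. It starts in a P-node if $n_1$ is a P-node, and ends in a P-node (resp. Q-node) if $n_t$ is a P-node (resp. Q-node). The path is almost rotable if it does not go through a central section and $n_t$ is a P-node that is a leaf of $\mathcal{T}$; it is rotable if it is almost rotable and it either starts in a P-node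 or starts in a non-central section. *)

theory Defs
  imports Complex_Main "HOL-Library.Multiset"
begin

text \<open>A finite simple graph G = (V,E): edges are two-element subsets of V.
  The edge (x,y) is represented by the set {x,y}; G - (x,y) is (V, E - {{x,y}}).\<close>

definition simple_graph :: "nat set \<Rightarrow> nat set set \<Rightarrow> bool" where
  "simple_graph V E \<longleftrightarrow> finite V \<and>
     (\<forall>e\<in>E. \<exists>u v. e = {u, v} \<and> u \<noteq> v \<and> u \<in> V \<and> v \<in> V)"

definition interval_graph :: "nat set \<Rightarrow> nat set set \<Rightarrow> bool" where
  "interval_graph V E \<longleftrightarrow> simple_graph V E \<and>
     (\<exists>I :: nat \<Rightarrow> real \<times> real.
        (\<forall>v\<in>V. fst (I v) \<le> snd (I v)) \<and>
        (\<forall>u\<in>V. \<forall>v\<in>V. u \<noteq> v \<longrightarrow>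
            ({u, v} \<in> E \<longleftrightarrow> max (fst (I u)) (fst (I v)) \<le> min (snd (I u)) (snd (I v)))))"

definition is_clique :: "nat set \<Rightarrow> nat set set \<Rightarrow> nat set \<Rightarrow> bool" where
  "is_clique V E C \<longleftrightarrow> C \<subseteq> V \<and> (\<forall>u\<in>C. \<forall>v\<in>C. u \<noteq> v \<longrightarrow> {u, v} \<in> E)"

definition max_cliques :: "nat set \<Rightarrow> nat set set \<Rightarrow> nat set set" where
  "max_cliques V E = {C. is_clique V E C \<and> (\<forall>D. is_clique V E D \<and> C \<subseteq> D \<longrightarrow> D = C)}"

text \<open>A P-node carries a vertex set and the (ordered) list of its child subtrees
  (every child subtree of a P-node is nonempty by construction).
  A Q-node carries the list of its positions; position i carries the section S_i
  and a possibly empty child subtree T_i (None = empty).\<close>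

datatype mpq = PNode "nat set" "mpq list" | QNode "(nat set \<times> mpq option) list"

text \<open>Nodes are identified by their positions (lists of 0-based child indices).\<close>

primrec subtree :: "nat list \<Rightarrow> mpq \<Rightarrow> mpq option" where
  "subtree [] t = Some t"
| "subtree (i # p) t =
     (case t of
        PNode A cs \<Rightarrow> (if i < length cs then subtree p (cs ! i) else None)
      | QNode ss \<Rightarrow> (if i < length ss then
                       (case snd (ss ! i) of None \<Rightarrow> None | Some c \<Rightarrow> subtree p c)
                     else None))"

definition positions :: "mpq \<Rightarrow> nat list set" where
  "positions T = {p. subtree p T \<noteq> None}"

definition node_at :: "mpq \<Rightarrow> nat list \<Rightarrow> mpq" where
  "node_at T p = the (subtree p T)"

fun node_vs :: "mpq \<Rightarrow> nat set" where
  "node_vs (PNode A cs) = A"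
| "node_vs (QNode ss) = \<Union> (set (map fst ss))"

definition all_verts :: "mpq \<Rightarrow> nat set" where
  "all_verts T = \<Union> {node_vs (node_at T p) | p. p \<in> positions T}"

definition subverts :: "mpq option \<Rightarrow> nat set" where
  "subverts c = (case c of None \<Rightarrow> {} | Some t \<Rightarrow> all_verts t)"

text \<open>1-based access to the sections S_i, subtrees T_i and vertex sets V_i of a Q-node.\<close>

definition sec :: "(nat set \<times> mpq option) list \<Rightarrow> nat \<Rightarrow> nat set" where
  "sec ss i = fst (ss ! (i - 1))"

definition Vsub :: "(nat set \<times> mpq option) list \<Rightarrow> nat \<Rightarrow> nat set" where
  "Vsub ss i = subverts (snd (ss ! (i - 1)))"

text \<open>l(v) and r(v), 1-based.\<close>

definition lidx :: "(nat set \<times> mpq option) list \<Rightarrow> nat \<Rightarrow> nat" where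
  "lidx ss v = (LEAST i. 1 \<le> i \<and> i \<le> length ss \<and> v \<in> sec ss i)"

definition ridx :: "(nat set \<times> mpq option) list \<Rightarrow> nat \<Rightarrow> nat" where
  "ridx ss v = (GREATEST i. 1 \<le> i \<and> i \<le> length ss \<and> v \<in> sec ss i)"

text \<open>The maximal cliques along descending paths, read from left to right.\<close>

fun cliques :: "mpq \<Rightarrow> nat set list" where
  "cliques (PNode A cs) =
     (if cs = [] then [A] else concat (map (\<lambda>c. map ((\<union>) A) (cliques c)) cs))"
| "cliques (QNode ss) =
     concat (map (\<lambda>sc. case snd sc of None \<Rightarrow> [fst sc]
                                 | Some t \<Rightarrow> map ((\<union>) (fst sc)) (cliques t)) ss)"

inductive equiv_tree :: "mpq \<Rightarrow> mpq \<Rightarrow> bool" where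
  eqP: "list_all2 equiv_tree cs ds \<Longrightarrow> mset ds = mset es \<Longrightarrow>
        equiv_tree (PNode A cs) (PNode A es)"
| eqQ: "list_all2 (\<lambda>sc sd. fst sc = fst sd \<and> rel_option equiv_tree (snd sc) (snd sd)) ss ts \<Longrightarrow>
        equiv_tree (QNode ss) (QNode (if b then rev ts else ts))"
monos list_all2_mono option.rel_mono

definition consecutive_clique_order :: "nat set \<Rightarrow> nat set set \<Rightarrow> nat set list \<Rightarrow> bool" where
  "consecutive_clique_order V E L \<longleftrightarrow> distinct L \<and> set L = max_cliques V E \<and>
     (\<forall>v i j k. i \<le> j \<and> j \<le> k \<and> k < length L \<and> v \<in> L ! i \<and> v \<in> L ! k \<longrightarrow> v \<in> L ! j)"

definition Q_node_ok :: "(nat set \<times> mpq option) list \<Rightarrow> bool" where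
  "Q_node_ok ss \<longleftrightarrow> (let k = length ss; S = sec ss; W = Vsub ss in
     k \<ge> 3 \<and>
     \<comment> \<open>(a)\<close> W 1 \<noteq> {} \<and> W k \<noteq> {} \<and>
     \<comment> \<open>(b)\<close> S 1 \<subseteq> S 2 \<and> S k \<subseteq> S (k - 1) \<and>
     \<comment> \<open>(c),(d)\<close> (\<forall>i. 2 \<le> i \<and> i \<le> k \<longrightarrow> S (i - 1) \<inter> S i \<noteq> {} \<and> S (i - 1) \<noteq> S i) \<and>
     \<comment> \<open>(e)\<close> (\<forall>i. 2 \<le> i \<and> i \<le> k - 1 \<longrightarrow>
                (S i \<inter> S (i + 1)) - S 1 \<noteq> {} \<and> (S (i - 1) \<inter> S i) - S k \<noteq> {}) \<and>
     \<comment> \<open>(f)\<close> (\<forall>i. 2 \<le> i \<and> i \<le> k \<longrightarrow>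
                (S (i - 1) \<union> W (i - 1)) - S i \<noteq> {} \<and> (S i \<union> W i) - S (i - 1) \<noteq> {}))"

definition mpq_tree_of :: "nat set \<Rightarrow> nat set set \<Rightarrow> mpq \<Rightarrow> bool" where
  "mpq_tree_of V E T \<longleftrightarrow>
     \<comment> \<open>vertex assignment\<close>
     all_verts T = V \<and>
     (\<forall>v\<in>V. \<exists>!p. p \<in> positions T \<and> v \<in> node_vs (node_at T p)) \<and>
     (\<forall>p ss. p \<in> positions T \<and> node_at T p = QNode ss \<longrightarrow>
        length ss \<ge> 3 \<and>
        (\<forall>v \<in> node_vs (QNode ss). \<exists>l r. 1 \<le> l \<and> l < r \<and> r \<le> length ss \<and>
            (\<forall>i. 1 \<le> i \<and> i \<le> length ss \<longrightarrow> (v \<in> sec ss i \<longleftrightarrow> l \<le> i \<and> i \<le> r)))) \<and>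
     \<comment> \<open>maximal cliques in bijection with the descending paths\<close>
     distinct (cliques T) \<and> set (cliques T) = max_cliques V E \<and>
     \<comment> \<open>the clique orders of equivalent trees are exactly the consecutive orders\<close>
     {cliques T' | T'. equiv_tree T T'} = {L. consecutive_clique_order V E L} \<and>
     \<comment> \<open>(a)--(f)\<close>
     (\<forall>p ss. p \<in> positions T \<and> node_at T p = QNode ss \<longrightarrow> Q_node_ok ss) \<and>
     \<comment> \<open>(g)\<close>
     (\<forall>p i cs ds. p \<in> positions T \<and> (p @ [i]) \<in> positions T \<and>
        node_at T p = PNode {} cs \<longrightarrow> node_at T (p @ [i]) \<noteq> PNode {} ds) \<and>
     \<comment> \<open>(h)\<close>
     (\<forall>p A c B ds. p \<in> positions T \<and> node_at T p = PNode A [c] \<longrightarrow> c \<noteq> PNode B ds)"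

definition node :: "mpq \<Rightarrow> nat \<Rightarrow> nat list" where
  "node T v = (THE p. p \<in> positions T \<and> v \<in> node_vs (node_at T p))"

text \<open>x is over y: node(x) is the lowest common ancestor of node(x) and node(y),
  i.e. node(x) is an ancestor-or-self (prefix) of node(y).\<close>

definition over :: "mpq \<Rightarrow> nat \<Rightarrow> nat \<Rightarrow> bool" where
  "over T x y \<longleftrightarrow> (\<exists>q. node T y = node T x @ q)"

text \<open>The <x,y>-tree-path is n_m = node_at T (take m (node T y)) for
  length (node T x) \<le> m \<le> length (node T y).\<close>

definition almost_rotable :: "mpq \<Rightarrow> nat \<Rightarrow> nat \<Rightarrow> bool" where
  "almost_rotable T x y \<longleftrightarrow>
     (let px = node T x; py = node T y in
       (\<forall>m. length px < m \<and> m < length py \<longrightarrow>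
          (case node_at T (take m py) of
             QNode ss \<Rightarrow> \<not> (1 < Suc (py ! m) \<and> Suc (py ! m) < length ss)
           | PNode _ _ \<Rightarrow> True)) \<and>
       (\<exists>A. node_at T py = PNode A []))"

text \<open>The path starts in the x-central section S_a (1-based a) of the Q-node node(x).\<close>

definition starts_in_central :: "mpq \<Rightarrow> nat \<Rightarrow> nat \<Rightarrow> nat \<Rightarrow> bool" where
  "starts_in_central T x y a \<longleftrightarrow>
     (\<exists>ss. node_at T (node T x) = QNode ss \<and>
        a = Suc (node T y ! length (node T x)) \<and>
        lidx ss x < a \<and> a < ridx ss x)"

end

theory Submission
  imports Defs "HOL-Library.Sublist"
begin

text \<open>Let U be the set of vertices assigned to the ancestors of node(x). Since y has no neighbour
  in T_a apart from itself, every maximal clique containing y is U \<union> S_a \<union> {y}, so y lies in a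
  single maximal clique C_y. Deleting y from all maximal cliques in the clique order of the
  MPQ-tree and inserting C_y - {x} at a suitable cut again gives a sequence of cliques of
  G - (x,y) covering all vertices and edges in which the cliques containing any vertex are
  consecutive; such a sequence is an interval model. The cut must meet two requirements: the
  cliques on either side of it share only vertices of C_y - {x}, and one of them contains
  C_y - {x, y} = (U \<union> S_a) - {x}. Each of the four hypotheses provides such a cut: between S_(b-1)
  and S_b, between S_b and S_(b+1), before S_1, or after S_k.\<close>

section \<open>Consecutive clique orders and interval graphs\<close>

definition vertex_consecutive :: "'a set list \<Rightarrow> bool" where
  "vertex_consecutive L \<longleftrightarrow>
     (\<forall>v i j k. i \<le> j \<and> j \<le> k \<and> k < length L \<and> v \<in> L ! i \<and> v \<in> L ! k \<longrightarrow> v \<in> L ! j)"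

lemma vertex_consecutiveD:
  "vertex_consecutive L \<Longrightarrow> i \<le> j \<Longrightarrow> j \<le> k \<Longrightarrow> k < length L \<Longrightarrow> v \<in> L ! i \<Longrightarrow> v \<in> L ! k
   \<Longrightarrow> v \<in> L ! j"
  unfolding vertex_consecutive_def by blast

lemma vertex_consecutive_map_Diff:
  assumes "vertex_consecutive L"
  shows "vertex_consecutive (map (\<lambda>C. C - Y) L)"
  unfolding vertex_consecutive_def
proof (intro allI impI, elim conjE)
  fix v i j k
  assume "i \<le> j" "j \<le> k" "k < length (map (\<lambda>C. C - Y) L)"
    "v \<in> map (\<lambda>C. C - Y) L ! i" "v \<in> map (\<lambda>C. C - Y) L ! k"
  then show "v \<in> map (\<lambda>C. C - Y) L ! j"
    using vertex_consecutiveD[OF assms, of i j k v] by simp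
qed

lemma vertex_consecutive_rev:
  assumes "vertex_consecutive L"
  shows "vertex_consecutive (rev L)"
  unfolding vertex_consecutive_def
proof (intro allI impI, elim conjE)
  fix v i j k
  assume "i \<le> j" "j \<le> k" "k < length (rev L)" "v \<in> rev L ! i" "v \<in> rev L ! k"
  then show "v \<in> rev L ! j"
    using vertex_consecutiveD[OF assms, of "length L - Suc k" "length L - Suc j" "length L - Suc i" v]
    by (simp add: rev_nth)
qed

lemma vertex_consecutive_insert_before_hd:
  assumes cons: "vertex_consecutive (A @ B)" and B: "B \<noteq> []"
    and cut: "A \<noteq> [] \<Longrightarrow> last A \<inter> hd B \<subseteq> D"
    and D: "D \<subseteq> hd B \<union> Z" and Z: "Z \<inter> \<Union> (set (A @ B)) = {}"
  shows "vertex_consecutive (A @ D # B)"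
proof -
  let ?L = "A @ B" and ?L' = "A @ D # B" and ?n = "length A"
  \<comment> \<open>g maps positions in A @ D # B to positions in A @ B, sending D to the position of hd B\<close>
  define g where "g m = (if m \<le> ?n then m else m - 1)" for m
  have g_mono: "m \<le> m' \<Longrightarrow> g m \<le> g m'" for m m'
    unfolding g_def by auto
  have g_len: "m < length ?L' \<Longrightarrow> g m < length ?L" for m
    using B by (cases B) (auto simp: g_def)
  have off_D: "?L' ! m = ?L ! g m" if "m \<noteq> ?n" for m
    using that unfolding g_def by (auto simp: nth_append nth_Cons')
  have hd_B: "hd B = ?L ! ?n"
    using B by (simp add: nth_append hd_conv_nth)
  have last_A: "last A = ?L ! (?n - 1)" if "A \<noteq> []"
    using that by (simp add: nth_append last_conv_nth)
  have in_L: "v \<in> ?L ! g m" if "v \<in> ?L' ! m" "v \<notin> Z" for v m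
  proof (cases "m = ?n")
    case True
    then show ?thesis using that D hd_B by (auto simp: g_def)
  qed (use that off_D in simp)
  show ?thesis
    unfolding vertex_consecutive_def
  proof (intro allI impI, elim conjE)
    fix v i j k
    assume ij: "i \<le> j" and jk: "j \<le> k" and k: "k < length ?L'"
      and vi: "v \<in> ?L' ! i" and vk: "v \<in> ?L' ! k"
    show "v \<in> ?L' ! j"
    proof (cases "v \<in> Z")
      case True
      have "m = ?n" if "m < length ?L'" "v \<in> ?L' ! m" for m
      proof (rule ccontr)
        assume "m \<noteq> ?n"
        then have "v \<in> \<Union> (set ?L)"
          using that off_D[of m] g_len[of m] nth_mem[of "g m" ?L] by auto
        then show False using Z True by blast
      qed
      then show ?thesis using vi vk ij jk k by (metis le_antisym le_less_trans)
    next
      case False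
      have vi': "v \<in> ?L ! g i" and vk': "v \<in> ?L ! g k"
        using in_L vi vk False by auto
      have "v \<in> ?L ! g j"
        using vertex_consecutiveD[OF cons g_mono[OF ij] g_mono[OF jk] g_len[OF k] vi' vk'] .
      show ?thesis
      proof (cases "j = ?n \<and> i < ?n \<and> ?n < k")
        case True
        then have "A \<noteq> []" by auto
        have "g i \<le> ?n - 1" "?n - 1 \<le> g k"
          using True unfolding g_def by auto
        then have "v \<in> last A"
          using vertex_consecutiveD[OF cons _ _ g_len[OF k] vi' vk'] last_A[OF \<open>A \<noteq> []\<close>] by simp
        moreover have "v \<in> hd B"
          using \<open>v \<in> ?L ! g j\<close> True hd_B by (simp add: g_def)
        ultimately show ?thesis using cut[OF \<open>A \<noteq> []\<close>] True by auto
      next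
        case False
        then consider "j \<noteq> ?n" | "i = j" | "j = k"
          using ij jk by linarith
        then show ?thesis
          by cases (use vi vk off_D \<open>v \<in> ?L ! g j\<close> in auto)
      qed
    qed
  qed
qed

lemma vertex_consecutive_insert_after_last:
  assumes cons: "vertex_consecutive (A @ B)" and A: "A \<noteq> []"
    and cut: "B \<noteq> [] \<Longrightarrow> last A \<inter> hd B \<subseteq> D"
    and D: "D \<subseteq> last A \<union> Z" and Z: "Z \<inter> \<Union> (set (A @ B)) = {}"
  shows "vertex_consecutive (A @ D # B)"
proof -
  have "vertex_consecutive (rev B @ D # rev A)"
  proof (rule vertex_consecutive_insert_before_hd)
    show "vertex_consecutive (rev B @ rev A)"
      using vertex_consecutive_rev[OF cons] by simp
    show "rev B \<noteq> [] \<Longrightarrow> last (rev B) \<inter> hd (rev A) \<subseteq> D"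
      using cut by (simp add: hd_rev last_rev Int_commute)
  qed (use A D Z in \<open>auto simp: hd_rev\<close>)
  then show ?thesis
    using vertex_consecutive_rev by fastforce
qed

lemma max_clique_containing:
  assumes "finite V" and "is_clique V E C"
  obtains M where "M \<in> max_cliques V E" and "C \<subseteq> M"
proof -
  let ?S = "{D. is_clique V E D \<and> C \<subseteq> D}"
  have "?S \<subseteq> Pow V"
    by (auto simp: is_clique_def)
  then have "finite ?S"
    using assms(1) by (simp add: finite_subset)
  moreover have "?S \<noteq> {}"
    using assms(2) by auto
  ultimately obtain M where M: "M \<in> ?S" "\<forall>D\<in>?S. M \<subseteq> D \<longrightarrow> M = D"
    by (metis (no_types, lifting) finite_has_maximal)
  have "M \<in> max_cliques V E"
    unfolding max_cliques_def
  proof (intro CollectI conjI allI impI)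
    show "is_clique V E M" using M(1) by simp
    fix D assume D: "is_clique V E D \<and> M \<subseteq> D"
    then have "D \<in> ?S" using M(1) by auto
    with M(2) D show "D = M" by auto
  qed
  with M(1) show ?thesis using that by blast
qed

lemma simple_graph_edgeD:
  assumes "simple_graph V E" and "{x, y} \<in> E"
  shows "x \<noteq> y" and "x \<in> V" and "y \<in> V"
  using assms unfolding simple_graph_def by (auto simp: doubleton_eq_iff)

lemma interval_graph_if_consecutive_clique_cover:
  assumes graph: "simple_graph V E" and cons: "vertex_consecutive L"
    and cliques: "\<And>C. C \<in> set L \<Longrightarrow> is_clique V E C"
    and vertex_cover: "\<And>v. v \<in> V \<Longrightarrow> \<exists>C\<in>set L. v \<in> C"
    and edge_cover: "\<And>u v. {u, v} \<in> E \<Longrightarrow> \<exists>C\<in>set L. u \<in> C \<and> v \<in> C"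
  shows "interval_graph V E"
proof -
  define idx where "idx v = {i. i < length L \<and> v \<in> L ! i}" for v
  define lo where "lo v = Min (idx v)" for v
  define hi where "hi v = Max (idx v)" for v
  have idx_finite: "finite (idx v)" for v
    by (simp add: idx_def)
  have idx_ne: "idx v \<noteq> {}" if "v \<in> V" for v
    using vertex_cover[OF that] by (auto simp: idx_def in_set_conv_nth)
  have idx_bounds: "lo v \<in> idx v" "hi v \<in> idx v" "\<And>i. i \<in> idx v \<Longrightarrow> lo v \<le> i \<and> i \<le> hi v"
    if "v \<in> V" for v
    using idx_ne[OF that] idx_finite[of v] unfolding lo_def hi_def by auto
  have interval: "v \<in> L ! i" if "v \<in> V" "lo v \<le> i" "i \<le> hi v" for v i
    using vertex_consecutiveD[OF cons that(2,3)] idx_bounds[OF that(1)] by (auto simp: idx_def)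
  have "{u, v} \<in> E \<longleftrightarrow> max (lo u) (lo v) \<le> min (hi u) (hi v)"
    if u: "u \<in> V" and v: "v \<in> V" and "u \<noteq> v" for u v
  proof
    assume "{u, v} \<in> E"
    then obtain i where "i < length L" "u \<in> L ! i" "v \<in> L ! i"
      using edge_cover by (metis in_set_conv_nth)
    then show "max (lo u) (lo v) \<le> min (hi u) (hi v)"
      using idx_bounds(3)[OF u, of i] idx_bounds(3)[OF v, of i] by (auto simp: idx_def)
  next
    assume overlap: "max (lo u) (lo v) \<le> min (hi u) (hi v)"
    let ?i = "max (lo u) (lo v)"
    have "?i < length L" using overlap idx_bounds(2)[OF u] by (auto simp: idx_def)
    moreover have "u \<in> L ! ?i" "v \<in> L ! ?i"
      using interval[OF u] interval[OF v] overlap by auto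
    ultimately show "{u, v} \<in> E"
      using cliques[OF nth_mem] \<open>u \<noteq> v\<close> unfolding is_clique_def by blast
  qed
  then show ?thesis
    unfolding interval_graph_def
    using graph idx_bounds
    by (intro conjI exI[of _ "\<lambda>v. (real (lo v), real (hi v))"]) auto
qed

definition fits_between :: "'a set \<Rightarrow> 'a set list \<Rightarrow> 'a set list \<Rightarrow> bool" where
  "fits_between K A B \<longleftrightarrow>
     (A \<noteq> [] \<longrightarrow> B \<noteq> [] \<longrightarrow> last A \<inter> hd B \<subseteq> K) \<and>
     ((B \<noteq> [] \<and> K \<subseteq> hd B) \<or> (A \<noteq> [] \<and> K \<subseteq> last A))"

lemma fits_between_hdI:
  "B \<noteq> [] \<Longrightarrow> K \<subseteq> hd B \<Longrightarrow> (A \<noteq> [] \<Longrightarrow> last A \<inter> hd B \<subseteq> K) \<Longrightarrow> fits_between K A B"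
  by (simp add: fits_between_def)

lemma fits_between_lastI:
  "A \<noteq> [] \<Longrightarrow> K \<subseteq> last A \<Longrightarrow> (B \<noteq> [] \<Longrightarrow> last A \<inter> hd B \<subseteq> K) \<Longrightarrow> fits_between K A B"
  by (simp add: fits_between_def)

lemma vertex_consecutive_reinsert:
  assumes cons: "vertex_consecutive (A @ B)" and fits: "fits_between (D - {y}) A B"
  shows "vertex_consecutive (map (\<lambda>C. C - {y}) A @ D # map (\<lambda>C. C - {y}) B)"
proof -
  define A' where "A' = map (\<lambda>C. C - {y}) A"
  define B' where "B' = map (\<lambda>C. C - {y}) B"
  have cons': "vertex_consecutive (A' @ B')"
    using vertex_consecutive_map_Diff[OF cons] by (simp add: A'_def B'_def)
  have y_free: "{y} \<inter> \<Union> (set (A' @ B')) = {}"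
    by (auto simp: A'_def B'_def)
  have last_A': "last A' = last A - {y}" if "A \<noteq> []"
    using that by (simp add: A'_def last_map)
  have hd_B': "hd B' = hd B - {y}" if "B \<noteq> []"
    using that by (simp add: B'_def hd_map)
  have ne: "A' \<noteq> [] \<longleftrightarrow> A \<noteq> []" "B' \<noteq> [] \<longleftrightarrow> B \<noteq> []"
    by (simp_all add: A'_def B'_def)
  have cut': "last A' \<inter> hd B' \<subseteq> D" if "A \<noteq> []" "B \<noteq> []"
    using fits last_A'[OF that(1)] hd_B'[OF that(2)] that by (auto simp: fits_between_def)
  have "(B \<noteq> [] \<and> D - {y} \<subseteq> hd B) \<or> (A \<noteq> [] \<and> D - {y} \<subseteq> last A)"
    using fits by (simp add: fits_between_def)
  then show ?thesis
    unfolding A'_def[symmetric] B'_def[symmetric]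
  proof
    assume side: "B \<noteq> [] \<and> D - {y} \<subseteq> hd B"
    show "vertex_consecutive (A' @ D # B')"
    proof (rule vertex_consecutive_insert_before_hd[OF cons' _ _ _ y_free])
      show "D \<subseteq> hd B' \<union> {y}"
        using side hd_B' by auto
    qed (use side ne cut' in auto)
  next
    assume side: "A \<noteq> [] \<and> D - {y} \<subseteq> last A"
    show "vertex_consecutive (A' @ D # B')"
    proof (rule vertex_consecutive_insert_after_last[OF cons' _ _ _ y_free])
      show "D \<subseteq> last A' \<union> {y}"
        using side last_A' by auto
    qed (use side ne cut' in auto)
  qed
qed

lemma clique_cover_delete_edge:
  assumes graph: "simple_graph V E" and max_cliques: "set L = max_cliques V E"
    and edge: "{x, y} \<in> E" and Cy: "Cy \<in> set L" "y \<in> Cy"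
    and Cy_unique: "\<And>M. M \<in> set L \<Longrightarrow> y \<in> M \<Longrightarrow> M = Cy"
  defines "S \<equiv> insert (Cy - {x}) ((\<lambda>C. C - {y}) ` set L)"
  shows "C \<in> S \<Longrightarrow> is_clique V (E - {{x, y}}) C"
    and "v \<in> V \<Longrightarrow> \<exists>C\<in>S. v \<in> C"
    and "{u, v} \<in> E - {{x, y}} \<Longrightarrow> \<exists>C\<in>S. u \<in> C \<and> v \<in> C"
proof -
  have xy: "x \<noteq> y"
    using simple_graph_edgeD[OF graph edge] by simp
  have clique: "is_clique V E M" if "M \<in> set L" for M
    using that max_cliques by (simp add: max_cliques_def)
  have covered: "\<exists>C\<in>S. K \<subseteq> C" if K: "is_clique V E K" "y \<in> K \<Longrightarrow> x \<notin> K" for K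
  proof -
    have "finite V"
      using graph by (simp add: simple_graph_def)
    then obtain M where "M \<in> max_cliques V E" "K \<subseteq> M"
      using K(1) by (rule max_clique_containing)
    then have M: "M \<in> set L" "K \<subseteq> M"
      using max_cliques by simp_all
    show ?thesis
    proof (cases "y \<in> K")
      case True
      then have "M = Cy"
        using Cy_unique[OF M(1)] M(2) by auto
      with M(2) K(2) True have "K \<subseteq> Cy - {x}"
        by auto
      moreover have "Cy - {x} \<in> S"
        by (simp add: S_def)
      ultimately show ?thesis by (rule bexI)
    next
      case False
      then have "K \<subseteq> M - {y}"
        using M(2) by auto
      moreover have "M - {y} \<in> S"
        unfolding S_def using M(1) by blast
      ultimately show ?thesis by (rule bexI)
    qed
  qed
  show "is_clique V (E - {{x, y}}) C" if "C \<in> S"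
  proof -
    from that consider "C = Cy - {x}" | M where "M \<in> set L" "C = M - {y}"
      unfolding S_def by blast
    then show ?thesis
    proof cases
      case 1
      then show ?thesis
        using clique[OF Cy(1)] by (auto simp: is_clique_def doubleton_eq_iff)
    next
      case 2
      then show ?thesis
        using clique[OF 2(1)] by (auto simp: is_clique_def doubleton_eq_iff)
    qed
  qed
  show "\<exists>C\<in>S. v \<in> C" if v: "v \<in> V"
  proof -
    obtain C where "C \<in> S" "{v} \<subseteq> C"
      using covered[of "{v}"] v xy by (auto simp: is_clique_def)
    then show ?thesis by auto
  qed
  show "\<exists>C\<in>S. u \<in> C \<and> v \<in> C" if uv: "{u, v} \<in> E - {{x, y}}"
  proof -
    have "is_clique V E {u, v}"
      using uv simple_graph_edgeD[OF graph, of u v] by (auto simp: is_clique_def insert_commute)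
    moreover have "x \<notin> {u, v}" if "y \<in> {u, v}"
      using that uv xy by (auto simp: insert_commute)
    ultimately obtain C where "C \<in> S" "{u, v} \<subseteq> C"
      using covered by blast
    then show ?thesis by auto
  qed
qed

lemma interval_graph_delete_edge:
  assumes graph: "simple_graph V E" and cons: "vertex_consecutive L"
    and max_cliques: "set L = max_cliques V E" and edge: "{x, y} \<in> E"
    and Cy: "Cy \<in> set L" "y \<in> Cy" and Cy_unique: "\<And>M. M \<in> set L \<Longrightarrow> y \<in> M \<Longrightarrow> M = Cy"
    and split: "L = A @ B" and fits: "fits_between (Cy - {x, y}) A B"
  shows "interval_graph V (E - {{x, y}})"
proof -
  define L' where "L' = map (\<lambda>C. C - {y}) A @ (Cy - {x}) # map (\<lambda>C. C - {y}) B"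
  have set_L': "set L' = insert (Cy - {x}) ((\<lambda>C. C - {y}) ` set L)"
    unfolding L'_def split by auto
  have "Cy - {x} - {y} = Cy - {x, y}"
    by auto
  then have cons': "vertex_consecutive L'"
    unfolding L'_def using vertex_consecutive_reinsert[OF cons[unfolded split]] fits by simp
  have graph': "simple_graph V (E - {{x, y}})"
    using graph unfolding simple_graph_def by blast
  note cover = clique_cover_delete_edge[OF graph max_cliques edge Cy Cy_unique, folded set_L']
  show ?thesis
    by (rule interval_graph_if_consecutive_clique_cover[OF graph' cons' cover])
qed

section \<open>Clique orders of MPQ-trees\<close>

lemma concat_nth_split:
  "i < length xs \<Longrightarrow> concat xs = concat (take i xs) @ xs ! i @ concat (drop (Suc i) xs)"
  by (metis append_take_drop_id Cons_nth_drop_Suc concat.simps(2) concat_append)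

lemma in_concat_take_drop:
  assumes "C \<in> set (concat (take i xs)) \<union> set (concat (drop (Suc i) xs))"
  obtains j where "j < length xs" "j \<noteq> i" "C \<in> set (xs ! j)"
proof -
  from assms consider ys where "ys \<in> set (take i xs)" "C \<in> set ys"
    | ys where "ys \<in> set (drop (Suc i) xs)" "C \<in> set ys"
    by auto
  then show ?thesis
  proof cases
    case 1
    then obtain j where "j < length (take i xs)" "take i xs ! j = ys"
      using in_set_conv_nth by metis
    then show ?thesis using 1(2) that[of j] by simp
  next
    case 2
    then obtain j where "j < length (drop (Suc i) xs)" "drop (Suc i) xs ! j = ys"
      using in_set_conv_nth by metis
    then show ?thesis using 2(2) that[of "Suc i + j"] by simp
  qed
qed

lemma last_concat_take_Suc:
  assumes "j < length xs" and "xs ! j \<noteq> []"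
  shows "concat (take (Suc j) xs) \<noteq> [] \<and> last (concat (take (Suc j) xs)) \<in> set (xs ! j)"
  using assms by (simp add: take_Suc_conv_app_nth)

lemma hd_concat_drop:
  assumes "j < length xs" and "xs ! j \<noteq> []"
  shows "concat (drop j xs) \<noteq> [] \<and> hd (concat (drop j xs)) \<in> set (xs ! j)"
  using assms by (simp add: Cons_nth_drop_Suc[symmetric])

definition Qblock :: "nat set \<times> mpq option \<Rightarrow> nat set list" where
  "Qblock sc = (case snd sc of None \<Rightarrow> [fst sc] | Some t \<Rightarrow> map ((\<union>) (fst sc)) (cliques t))"

lemma cliques_QNode: "cliques (QNode ss) = concat (map Qblock ss)"
  by (simp add: Qblock_def[abs_def])

declare cliques.simps(2)[simp del] cliques_QNode[simp]

lemma fst_nth_subset_node_vs: "j < length ss \<Longrightarrow> fst (ss ! j) \<subseteq> node_vs (QNode ss)"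
  using nth_mem by fastforce

lemma section_subset_Qblock: "C \<in> set (Qblock sc) \<Longrightarrow> fst sc \<subseteq> C"
  by (auto simp: Qblock_def split: option.splits)

lemma snd_in_snds: "snd p \<in> Basic_BNFs.snds p"
  by (cases p) simp

lemma subtree_append:
  "subtree (p @ q) t = (case subtree p t of None \<Rightarrow> None | Some s \<Rightarrow> subtree q s)"
  by (induction p arbitrary: t) (auto split: mpq.splits option.splits)

lemma Nil_in_positions [simp]: "[] \<in> positions t"
  by (simp add: positions_def)

lemma node_at_Nil [simp]: "node_at t [] = t"
  by (simp add: node_at_def)

lemma Cons_in_positions_PNode:
  "i # q \<in> positions (PNode A cs) \<longleftrightarrow> i < length cs \<and> q \<in> positions (cs ! i)"
  by (simp add: positions_def)

lemma node_at_PNode_Cons: "i < length cs \<Longrightarrow> node_at (PNode A cs) (i # q) = node_at (cs ! i) q"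
  by (simp add: node_at_def)

lemma Cons_in_positions_QNode:
  "i # q \<in> positions (QNode ss) \<longleftrightarrow> i < length ss \<and> (\<exists>c. snd (ss ! i) = Some c \<and> q \<in> positions c)"
  by (auto simp: positions_def split: option.splits)

lemma node_at_QNode_Cons:
  "i < length ss \<Longrightarrow> snd (ss ! i) = Some c \<Longrightarrow> node_at (QNode ss) (i # q) = node_at c q"
  by (simp add: node_at_def)

lemma append_in_positions:
  "p \<in> positions t \<Longrightarrow> p @ q \<in> positions t \<longleftrightarrow> q \<in> positions (node_at t p)"
  by (auto simp: positions_def node_at_def subtree_append split: option.splits)

lemma prefix_in_positions: "p @ q \<in> positions t \<Longrightarrow> p \<in> positions t"
  by (auto simp: positions_def subtree_append split: option.splits)

lemma node_at_append: "p \<in> positions t \<Longrightarrow> node_at t (p @ q) = node_at (node_at t p) q"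
  by (auto simp: positions_def node_at_def subtree_append split: option.splits)

lemma clique_vertex_assigned:
  "C \<in> set (cliques t) \<Longrightarrow> v \<in> C \<Longrightarrow> \<exists>q\<in>positions t. v \<in> node_vs (node_at t q)"
proof (induction t arbitrary: C)
  case (PNode A cs)
  show ?case
  proof (cases "v \<in> A \<or> cs = []")
    case True
    then show ?thesis using PNode.prems by (intro bexI[of _ "[]"]) (auto split: if_splits)
  next
    case False
    then obtain c C' where c: "c \<in> set cs" "C' \<in> set (cliques c)" "v \<in> C'"
      using PNode.prems by (auto split: if_splits)
    from PNode.IH[OF c] obtain q where "q \<in> positions c" "v \<in> node_vs (node_at c q)"
      by blast
    moreover obtain i where "i < length cs" "cs ! i = c"
      using c(1) by (auto simp: in_set_conv_nth)
    ultimately show ?thesis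
      by (intro bexI[of _ "i # q"]) (simp_all add: Cons_in_positions_PNode node_at_PNode_Cons)
  qed
next
  case (QNode ss)
  then obtain sc where sc: "sc \<in> set ss" "C \<in> set (Qblock sc)"
    by auto
  show ?case
  proof (cases "v \<in> fst sc")
    case True
    then show ?thesis using sc(1) by (intro bexI[of _ "[]"]) auto
  next
    case False
    then obtain c C' where c: "snd sc = Some c" "C' \<in> set (cliques c)" "v \<in> C'"
      using sc(2) QNode.prems(2) by (auto simp: Qblock_def split: option.splits)
    from QNode.IH[OF sc(1) snd_in_snds _ c(2,3)] c(1) obtain q
      where "q \<in> positions c" "v \<in> node_vs (node_at c q)"
      by auto
    moreover obtain i where "i < length ss" "ss ! i = sc"
      using sc(1) by (auto simp: in_set_conv_nth)
    ultimately show ?thesis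
      using c(1) by (intro bexI[of _ "i # q"]) (auto simp: Cons_in_positions_QNode node_at_QNode_Cons)
  qed
qed

lemma assigned_in_all_verts:
  assumes "q \<in> positions t" and "v \<in> node_vs (node_at t q)"
  shows "v \<in> all_verts t"
  unfolding all_verts_def by (rule UnionI[of "node_vs (node_at t q)"]) (use assms in auto)

lemma cliques_subset_all_verts:
  assumes "C \<in> set (cliques t)"
  shows "C \<subseteq> all_verts t"
proof
  fix v assume "v \<in> C"
  then obtain q where "q \<in> positions t" "v \<in> node_vs (node_at t q)"
    using clique_vertex_assigned[OF assms] by blast
  then show "v \<in> all_verts t"
    by (rule assigned_in_all_verts)
qed

lemma cliques_nonempty:
  "(\<And>q ss. q \<in> positions t \<Longrightarrow> node_at t q = QNode ss \<Longrightarrow> ss \<noteq> []) \<Longrightarrow> cliques t \<noteq> []"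
proof (induction t)
  case (PNode A cs)
  show ?case
  proof (cases cs)
    case (Cons c cs')
    have "cliques c \<noteq> []"
      by (rule PNode.IH) (use Cons PNode.prems[of "0 # _"] in
          \<open>auto simp: Cons_in_positions_PNode node_at_PNode_Cons\<close>)
    with Cons show ?thesis by simp
  qed simp
next
  case (QNode ss)
  obtain s0 ss' where ss: "ss = s0 # ss'"
    using QNode.prems[of "[]" ss] by (cases ss) auto
  have "Qblock s0 \<noteq> []"
  proof (cases "snd s0")
    case (Some c)
    have "cliques c \<noteq> []"
    proof (rule QNode.IH[of s0 "snd s0" c])
      show "s0 \<in> set ss" "snd s0 \<in> Basic_BNFs.snds s0" "c \<in> set_option (snd s0)"
        using ss Some snd_in_snds[of s0] by simp_all
      fix q ss'' assume "q \<in> positions c" "node_at c q = QNode ss''"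
      then show "ss'' \<noteq> []"
        using QNode.prems[of "0 # q" ss''] ss Some
        by (simp add: Cons_in_positions_QNode node_at_QNode_Cons)
    qed
    then show ?thesis using Some by (simp add: Qblock_def)
  qed (simp add: Qblock_def)
  with ss show ?case by simp
qed

definition assigned_outside :: "mpq \<Rightarrow> nat list \<Rightarrow> nat \<Rightarrow> bool" where
  "assigned_outside t p v \<longleftrightarrow> (\<exists>q\<in>positions t. \<not> prefix p q \<and> v \<in> node_vs (node_at t q))"

lemma assigned_outside_mono:
  "prefix p p' \<Longrightarrow> assigned_outside t p v \<Longrightarrow> assigned_outside t p' v"
  unfolding assigned_outside_def using prefix_order.trans by blast

lemma assigned_outside_child:
  assumes "[i] \<in> positions t" and "assigned_outside (node_at t [i]) p v"
  shows "assigned_outside t (i # p) v"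
proof -
  from assms(2) obtain q where q: "q \<in> positions (node_at t [i])" "\<not> prefix p q"
    "v \<in> node_vs (node_at (node_at t [i]) q)"
    unfolding assigned_outside_def by (elim bexE conjE)
  have "i # q \<in> positions t" "node_at t (i # q) = node_at (node_at t [i]) q"
    using append_in_positions[OF assms(1), of q] node_at_append[OF assms(1), of q] q(1)
    by simp_all
  with q(2,3) show ?thesis
    unfolding assigned_outside_def by (intro bexI[of _ "i # q"]) simp_all
qed

lemma Qblock_vertex:
  assumes "j < length ss" "C \<in> set (Qblock (ss ! j))" "v \<in> C"
  shows "v \<in> fst (ss ! j) \<or>
    (\<exists>q. j # q \<in> positions (QNode ss) \<and> v \<in> node_vs (node_at (QNode ss) (j # q)))"
proof (cases "v \<in> fst (ss ! j)")
  case False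
  then obtain c C' where c: "snd (ss ! j) = Some c" "C' \<in> set (cliques c)" "v \<in> C'"
    using assms by (auto simp: Qblock_def split: option.splits)
  with clique_vertex_assigned obtain q where "q \<in> positions c" "v \<in> node_vs (node_at c q)"
    by blast
  with assms(1) c(1) show ?thesis
    by (auto simp: Cons_in_positions_QNode node_at_QNode_Cons)
qed simp

lemma assigned_outside_childI:
  assumes "v \<in> node_vs t \<or> (\<exists>j q. j \<noteq> i \<and> j # q \<in> positions t \<and> v \<in> node_vs (node_at t (j # q)))"
  shows "assigned_outside t [i] v"
  using assms unfolding assigned_outside_def
proof (elim disjE exE conjE)
  assume "v \<in> node_vs t"
  then show "\<exists>q\<in>positions t. \<not> prefix [i] q \<and> v \<in> node_vs (node_at t q)"
    by (intro bexI[of _ "[]"]) simp_all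
next
  fix j q assume "j \<noteq> i" "j # q \<in> positions t" "v \<in> node_vs (node_at t (j # q))"
  then show "\<exists>q\<in>positions t. \<not> prefix [i] q \<and> v \<in> node_vs (node_at t q)"
    by (intro bexI[of _ "j # q"]) simp_all
qed

lemma cliques_PNode_child_decomposition:
  assumes "i < length cs"
  obtains pre W post
  where "cliques (PNode A cs) = pre @ map ((\<union>) W) (cliques (cs ! i)) @ post"
    and "\<And>v. v \<in> W \<or> (\<exists>C\<in>set pre \<union> set post. v \<in> C) \<Longrightarrow> assigned_outside (PNode A cs) [i] v"
proof -
  define xs where "xs = map (\<lambda>c. map ((\<union>) A) (cliques c)) cs"
  have "cliques (PNode A cs) = concat (take i xs) @ map ((\<union>) A) (cliques (cs ! i)) @ concat (drop (Suc i) xs)"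
    using concat_nth_split[of i xs] assms by (auto simp: xs_def)
  moreover have "assigned_outside (PNode A cs) [i] v"
    if v: "v \<in> A \<or> (\<exists>C\<in>set (concat (take i xs)) \<union> set (concat (drop (Suc i) xs)). v \<in> C)" for v
  proof (cases "v \<in> A")
    case False
    with v obtain C where C: "C \<in> set (concat (take i xs)) \<union> set (concat (drop (Suc i) xs))" "v \<in> C"
      by blast
    obtain j where j: "j < length xs" "j \<noteq> i" "C \<in> set (xs ! j)"
      by (rule in_concat_take_drop[OF C(1)])
    with C(2) False obtain C' where "C' \<in> set (cliques (cs ! j))" "v \<in> C'"
      by (auto simp: xs_def)
    then obtain q where "q \<in> positions (cs ! j)" "v \<in> node_vs (node_at (cs ! j) q)"
      using clique_vertex_assigned by blast
    with j have "j # q \<in> positions (PNode A cs) \<and> v \<in> node_vs (node_at (PNode A cs) (j # q))"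
      by (simp add: xs_def Cons_in_positions_PNode node_at_PNode_Cons)
    with j(2) show ?thesis
      by (intro assigned_outside_childI) blast
  qed (simp add: assigned_outside_childI)
  ultimately show ?thesis
    by (rule that)
qed

lemma cliques_QNode_child_decomposition:
  assumes "i < length ss" and "snd (ss ! i) = Some c"
  obtains pre W post
  where "cliques (QNode ss) = pre @ map ((\<union>) W) (cliques c) @ post"
    and "\<And>v. v \<in> W \<or> (\<exists>C\<in>set pre \<union> set post. v \<in> C) \<Longrightarrow> assigned_outside (QNode ss) [i] v"
proof -
  define xs where "xs = map Qblock ss"
  have "cliques (QNode ss) = concat (take i xs) @ map ((\<union>) (fst (ss ! i))) (cliques c)
      @ concat (drop (Suc i) xs)"
    using concat_nth_split[of i xs] assms by (simp add: xs_def Qblock_def)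
  moreover have "assigned_outside (QNode ss) [i] v"
    if v: "v \<in> fst (ss ! i) \<or> (\<exists>C\<in>set (concat (take i xs)) \<union> set (concat (drop (Suc i) xs)). v \<in> C)"
    for v
  proof (cases "v \<in> fst (ss ! i)")
    case True
    then show ?thesis
      using fst_nth_subset_node_vs[OF assms(1)] by (intro assigned_outside_childI) auto
  next
    case False
    with v obtain C where C: "C \<in> set (concat (take i xs)) \<union> set (concat (drop (Suc i) xs))" "v \<in> C"
      by blast
    obtain j where j: "j < length xs" "j \<noteq> i" "C \<in> set (xs ! j)"
      by (rule in_concat_take_drop[OF C(1)])
    then have "j < length ss" "C \<in> set (Qblock (ss ! j))"
      by (simp_all add: xs_def)
    from Qblock_vertex[OF this C(2)] show ?thesis
    proof
      assume "v \<in> fst (ss ! j)"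
      then show ?thesis
        using fst_nth_subset_node_vs[OF \<open>j < length ss\<close>] by (intro assigned_outside_childI) auto
    qed (use j(2) in \<open>blast intro: assigned_outside_childI\<close>)
  qed
  ultimately show ?thesis
    by (rule that)
qed

lemma cliques_child_decomposition:
  assumes "[i] \<in> positions t"
  obtains pre W post where "cliques t = pre @ map ((\<union>) W) (cliques (node_at t [i])) @ post"
    and "\<And>v. v \<in> W \<or> (\<exists>C\<in>set pre \<union> set post. v \<in> C) \<Longrightarrow> assigned_outside t [i] v"
proof (cases t)
  case (PNode A cs)
  then have "i < length cs" "node_at t [i] = cs ! i"
    using assms by (simp_all add: Cons_in_positions_PNode node_at_PNode_Cons)
  with PNode show ?thesis
    using cliques_PNode_child_decomposition that by metis
next
  case (QNode ss)
  then obtain c where "i < length ss" "snd (ss ! i) = Some c" "node_at t [i] = c"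
    using assms by (auto simp: Cons_in_positions_QNode node_at_QNode_Cons)
  with QNode show ?thesis
    using cliques_QNode_child_decomposition that by metis
qed

lemma cliques_decomposition_at:
  "p \<in> positions t \<Longrightarrow> \<exists>pre post U. cliques t = pre @ map ((\<union>) U) (cliques (node_at t p)) @ post \<and>
    (\<forall>v. v \<in> U \<or> (\<exists>C\<in>set pre \<union> set post. v \<in> C) \<longrightarrow> assigned_outside t p v)"
proof (induction p arbitrary: t)
  case Nil
  show ?case by (intro exI[of _ "[]"] exI[of _ "{}"]) simp
next
  case (Cons i p)
  have child: "[i] \<in> positions t"
    using Cons.prems prefix_in_positions[of "[i]" p] by simp
  obtain pre W post where
    t: "cliques t = pre @ map ((\<union>) W) (cliques (node_at t [i])) @ post" and
    t_out: "\<And>v. v \<in> W \<or> (\<exists>C\<in>set pre \<union> set post. v \<in> C) \<Longrightarrow> assigned_outside t [i] v"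
    using cliques_child_decomposition[OF child] by blast
  have "p \<in> positions (node_at t [i])"
    using Cons.prems append_in_positions[OF child, of p] by simp
  from Cons.IH[OF this] obtain pre' post' U where
    c: "cliques (node_at t [i]) = pre' @ map ((\<union>) U) (cliques (node_at (node_at t [i]) p)) @ post'" and
    c_out: "\<And>v. v \<in> U \<or> (\<exists>C\<in>set pre' \<union> set post'. v \<in> C) \<Longrightarrow> assigned_outside (node_at t [i]) p v"
    by blast
  have node: "node_at (node_at t [i]) p = node_at t (i # p)"
    using node_at_append[OF child, of p] by simp
  show ?case
  proof (intro exI conjI allI impI)
    show "cliques t = (pre @ map ((\<union>) W) pre') @ map ((\<union>) (W \<union> U)) (cliques (node_at t (i # p)))
        @ (map ((\<union>) W) post' @ post)"
      using t c node by (simp add: Un_assoc)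
    fix v
    assume "v \<in> W \<union> U \<or> (\<exists>C\<in>set (pre @ map ((\<union>) W) pre') \<union> set (map ((\<union>) W) post' @ post). v \<in> C)"
    then consider "v \<in> W \<or> (\<exists>C\<in>set pre \<union> set post. v \<in> C)"
      | "v \<in> U \<or> (\<exists>C\<in>set pre' \<union> set post'. v \<in> C)"
      by auto
    then show "assigned_outside t (i # p) v"
    proof cases
      case 1
      then show ?thesis by (rule assigned_outside_mono[rotated, OF t_out]) simp
    next
      case 2
      then show ?thesis by (rule assigned_outside_child[OF child c_out])
    qed
  qed
qed

lemma equiv_tree_refl: "equiv_tree t t"
proof (induction t)
  case (PNode A cs)
  then have "list_all2 equiv_tree cs cs"
    by (intro list.rel_refl_strong)
  then show ?case using eqP[of cs cs cs A] by simp
next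
  case (QNode ss)
  have "list_all2 (\<lambda>sc sd. fst sc = fst sd \<and> rel_option equiv_tree (snd sc) (snd sd)) ss ss"
  proof (rule list.rel_refl_strong)
    fix sc assume sc: "sc \<in> set ss"
    have "rel_option equiv_tree (snd sc) (snd sc)"
      by (rule option.rel_refl_strong) (rule QNode.IH[OF sc snd_in_snds])
    then show "fst sc = fst sc \<and> rel_option equiv_tree (snd sc) (snd sc)" by simp
  qed
  then show ?case using eqQ[of ss ss False] by simp
qed

lemma QNode_vertex_in_sec:
  assumes "x \<in> node_vs (QNode ss)"
  obtains i where "1 \<le> i" "i \<le> length ss" "x \<in> sec ss i"
proof -
  obtain sc where "sc \<in> set ss" "x \<in> fst sc"
    using assms by auto
  then obtain j where "j < length ss" "x \<in> fst (ss ! j)"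
    using in_set_conv_nth by metis
  then show ?thesis
    using that[of "Suc j"] by (simp add: sec_def)
qed

lemma lidx_le_length:
  assumes "x \<in> node_vs (QNode ss)"
  shows "lidx ss x \<le> length ss"
proof -
  obtain i where i: "1 \<le> i" "i \<le> length ss" "x \<in> sec ss i"
    by (rule QNode_vertex_in_sec[OF assms])
  then have "lidx ss x \<le> i"
    unfolding lidx_def by (intro Least_le) simp
  with i(2) show ?thesis by simp
qed

lemma notin_sec_below_lidx: "1 \<le> i \<Longrightarrow> i \<le> length ss \<Longrightarrow> i < lidx ss x \<Longrightarrow> x \<notin> sec ss i"
  unfolding lidx_def using not_less_Least by blast

lemma one_le_ridx:
  assumes "x \<in> node_vs (QNode ss)"
  shows "1 \<le> ridx ss x"
proof -
  let ?P = "\<lambda>i. 1 \<le> i \<and> i \<le> length ss \<and> x \<in> sec ss i"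
  obtain i where "?P i"
    using QNode_vertex_in_sec[OF assms] by blast
  then have "?P (Greatest ?P)"
    by (rule GreatestI_nat[where b = "length ss"]) simp
  then show ?thesis
    unfolding ridx_def by simp
qed

lemma notin_sec_above_ridx: "i \<le> length ss \<Longrightarrow> ridx ss x < i \<Longrightarrow> x \<notin> sec ss i"
  unfolding ridx_def
  using Greatest_le_nat[of "\<lambda>i. 1 \<le> i \<and> i \<le> length ss \<and> x \<in> sec ss i" i "length ss"] by auto

lemma over_starts_in_centralE:
  assumes "over T x y" and "node T x \<noteq> node T y" and "starts_in_central T x y a"
  obtains i q where "node T y = node T x @ i # q" and "a = Suc i"
proof -
  obtain r where r: "node T y = node T x @ r"
    using assms(1) unfolding over_def by blast
  with assms(2) obtain i q where "r = i # q"
    by (cases r) auto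
  with r have y: "node T y = node T x @ i # q"
    by simp
  then have "a = Suc i"
    using assms(3) unfolding starts_in_central_def by auto
  with y show ?thesis by (rule that)
qed

section \<open>MPQ-trees of interval graphs\<close>

locale mpq_graph =
  fixes V :: "nat set" and E :: "nat set set" and T :: mpq
  assumes mpq_tree: "mpq_tree_of V E T"
begin

lemma all_verts_eq: "all_verts T = V"
  using mpq_tree[unfolded mpq_tree_of_def] by (rule conjunct1)

lemma unique_assignment: "v \<in> V \<Longrightarrow> \<exists>!p. p \<in> positions T \<and> v \<in> node_vs (node_at T p)"
  using mpq_tree[unfolded mpq_tree_of_def, THEN conjunct2, THEN conjunct1] by blast

lemma QNode_length_ge_3: "q \<in> positions T \<Longrightarrow> node_at T q = QNode ss \<Longrightarrow> 3 \<le> length ss"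
  using mpq_tree[unfolded mpq_tree_of_def, THEN conjunct2, THEN conjunct2, THEN conjunct1] by blast

lemma set_cliques: "set (cliques T) = max_cliques V E"
  using mpq_tree[unfolded mpq_tree_of_def] by (elim conjE)

lemma vertex_in_clique:
  assumes "finite V" and "v \<in> V"
  obtains M where "M \<in> set (cliques T)" and "v \<in> M"
proof -
  have "is_clique V E {v}"
    using assms(2) by (simp add: is_clique_def)
  then obtain M where "M \<in> max_cliques V E" "{v} \<subseteq> M"
    by (rule max_clique_containing[OF assms(1)])
  then have "M \<in> set (cliques T)" "v \<in> M"
    using set_cliques by simp_all
  then show ?thesis by (rule that)
qed

lemma node_eqI:
  assumes "q \<in> positions T" and "v \<in> node_vs (node_at T q)"
  shows "node T v = q"
proof -
  have "v \<in> V"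
    using assms all_verts_eq unfolding all_verts_def by blast
  then show ?thesis
    unfolding node_def using assms by (intro the1_equality unique_assignment) simp_all
qed

lemma node_assigned:
  assumes "v \<in> V"
  shows "node T v \<in> positions T" and "v \<in> node_vs (node_at T (node T v))"
  using theI'[OF unique_assignment[OF assms]] unfolding node_def by auto

lemma vertex_consecutive_cliques: "vertex_consecutive (cliques T)"
proof -
  have orders: "{cliques T' | T'. equiv_tree T T'} = {L. consecutive_clique_order V E L}"
    using mpq_tree[unfolded mpq_tree_of_def] by (elim conjE)
  have "cliques T \<in> {cliques T' | T'. equiv_tree T T'}"
    using equiv_tree_refl by blast
  then have "consecutive_clique_order V E (cliques T)"
    unfolding orders by simp
  then show ?thesis
    unfolding consecutive_clique_order_def vertex_consecutive_def by blast
qed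

lemma cliques_node_at_nonempty:
  assumes "q \<in> positions T"
  shows "cliques (node_at T q) \<noteq> []"
proof (rule cliques_nonempty)
  fix q' ss assume "q' \<in> positions (node_at T q)" "node_at (node_at T q) q' = QNode ss"
  then have "q @ q' \<in> positions T" "node_at T (q @ q') = QNode ss"
    using append_in_positions[OF assms] node_at_append[OF assms] by auto
  then show "ss \<noteq> []"
    using QNode_length_ge_3 by force
qed

end

text \<open>U consists of the vertices of the ancestors of px; pre and post are the maximal cliques
  through the other branches of the tree.\<close>

locale mpq_Qnode = mpq_graph +
  fixes px :: "nat list" and ss :: "(nat set \<times> mpq option) list"
    and pre post :: "nat set list" and U :: "nat set"
  assumes Qnode_position: "px \<in> positions T"
    and Qnode_at: "node_at T px = QNode ss"
    and cliques_around_Qnode: "cliques T = pre @ map ((\<union>) U) (concat (map Qblock ss)) @ post"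
    and outer_assigned_outside:
      "\<And>v. v \<in> U \<or> (\<exists>C\<in>set pre \<union> set post. v \<in> C) \<Longrightarrow> assigned_outside T px v"

lemma (in mpq_graph) Qnode_context:
  assumes "p \<in> positions T" and "node_at T p = QNode ss"
  obtains pre post U where "mpq_Qnode V E T p ss pre post U"
proof -
  obtain pre post U where decomposition: "cliques T = pre @ map ((\<union>) U) (cliques (node_at T p)) @ post"
    and outside: "\<forall>v. v \<in> U \<or> (\<exists>C\<in>set pre \<union> set post. v \<in> C) \<longrightarrow> assigned_outside T p v"
    using cliques_decomposition_at[OF assms(1)] by blast
  have "mpq_Qnode V E T p ss pre post U"
  proof unfold_locales
    show "cliques T = pre @ map ((\<union>) U) (concat (map Qblock ss)) @ post"
      using decomposition assms(2) by simp
    show "assigned_outside T p v" if "v \<in> U \<or> (\<exists>C\<in>set pre \<union> set post. v \<in> C)" for v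
      using outside that by blast
  qed (use assms mpq_tree in simp_all)
  then show ?thesis by (rule that)
qed

context mpq_Qnode
begin

lemma below_Qnode:
  assumes "j # q \<in> positions (QNode ss)"
  shows "px @ j # q \<in> positions T" and "node_at T (px @ j # q) = node_at (QNode ss) (j # q)"
  using assms append_in_positions[OF Qnode_position] node_at_append[OF Qnode_position] Qnode_at
  by simp_all

lemma length_sections_ge_3: "3 \<le> length ss"
  using QNode_length_ge_3[OF Qnode_position Qnode_at] .

lemma node_of_Qnode_vertex: "v \<in> node_vs (QNode ss) \<Longrightarrow> node T v = px"
  using node_eqI[OF Qnode_position] Qnode_at by simp

lemma node_of_outer_vertex:
  assumes "v \<in> U \<or> (\<exists>C\<in>set pre \<union> set post. v \<in> C)"
  shows "\<not> prefix px (node T v)"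
proof -
  obtain q where "q \<in> positions T" "\<not> prefix px q" "v \<in> node_vs (node_at T q)"
    using outer_assigned_outside[OF assms] unfolding assigned_outside_def by blast
  then show ?thesis using node_eqI by simp
qed

lemma Qnode_vertex_notin_U:
  assumes "v \<in> node_vs (QNode ss)"
  shows "v \<notin> U"
proof
  assume "v \<in> U"
  then have "\<not> prefix px (node T v)" by (intro node_of_outer_vertex) simp
  with node_of_Qnode_vertex[OF assms] show False by simp
qed

lemma node_of_Qblock_vertex:
  assumes "j < length ss" "C \<in> set (Qblock (ss ! j))" "v \<in> C"
  shows "v \<in> fst (ss ! j) \<and> node T v = px \<or> (\<exists>q. node T v = px @ j # q)"
  using Qblock_vertex[OF assms]
proof
  assume "v \<in> fst (ss ! j)"
  then show ?thesis
    using node_of_Qnode_vertex fst_nth_subset_node_vs[OF assms(1)] by blast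
next
  assume "\<exists>q. j # q \<in> positions (QNode ss) \<and> v \<in> node_vs (node_at (QNode ss) (j # q))"
  then obtain q where "j # q \<in> positions (QNode ss)" "v \<in> node_vs (node_at (QNode ss) (j # q))"
    by blast
  then have "node T v = px @ j # q"
    using below_Qnode node_eqI by simp
  then show ?thesis by blast
qed

lemma node_of_subtree_vertex:
  assumes "j < length ss" and "v \<in> subverts (snd (ss ! j))"
  obtains q where "node T v = px @ j # q"
proof -
  obtain c q where "snd (ss ! j) = Some c" "q \<in> positions c" "v \<in> node_vs (node_at c q)"
    using assms(2) by (auto simp: subverts_def all_verts_def split: option.splits)
  with assms(1) have "j # q \<in> positions (QNode ss)" "v \<in> node_vs (node_at (QNode ss) (j # q))"
    by (auto simp: Cons_in_positions_QNode node_at_QNode_Cons)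
  then have "node T v = px @ j # q"
    using below_Qnode node_eqI by simp
  then show ?thesis by (rule that)
qed

lemma subtree_vertex_of_node:
  assumes "node T v = px @ j # q" and "v \<in> node_vs (node_at T (node T v))"
    and "node T v \<in> positions T"
  shows "j < length ss" and "v \<in> subverts (snd (ss ! j))"
proof -
  have "j # q \<in> positions (QNode ss)" and "v \<in> node_vs (node_at (QNode ss) (j # q))"
    using assms append_in_positions[OF Qnode_position] node_at_append[OF Qnode_position] Qnode_at
    by auto
  then obtain c where "j < length ss" "snd (ss ! j) = Some c" "q \<in> positions c"
    "v \<in> node_vs (node_at c q)"
    by (auto simp: Cons_in_positions_QNode node_at_QNode_Cons)
  then show "j < length ss" "v \<in> subverts (snd (ss ! j))"
    by (simp_all add: subverts_def assigned_in_all_verts)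
qed

lemma subtree_vertex_notin_Qnode:
  assumes "node T v = px @ j # q"
  shows "v \<notin> U" and "v \<notin> node_vs (QNode ss)"
proof -
  have "prefix px (node T v)"
    using assms by (auto intro: prefixI)
  then show "v \<notin> U"
    using node_of_outer_vertex[of v] by blast
  show "v \<notin> node_vs (QNode ss)"
    using node_of_Qnode_vertex assms by force
qed

lemma outer_clique_disjoint_Qblock:
  assumes "C \<in> set pre \<union> set post" "j < length ss" "C' \<in> set (Qblock (ss ! j))"
  shows "C \<inter> C' = {}"
proof (rule ccontr)
  assume "C \<inter> C' \<noteq> {}"
  then obtain v where v: "v \<in> C" "v \<in> C'" by blast
  have "\<not> prefix px (node T v)"
    using assms(1) v(1) by (intro node_of_outer_vertex) blast
  moreover have "prefix px (node T v)"
    using node_of_Qblock_vertex[OF assms(2,3) v(2)] by (auto intro: prefixI)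
  ultimately show False by blast
qed

lemma adjacent_Qblocks_shared:
  assumes "Suc j < length ss" "C1 \<in> set (Qblock (ss ! j))" "C2 \<in> set (Qblock (ss ! Suc j))"
  shows "C1 \<inter> C2 \<subseteq> fst (ss ! j) \<inter> fst (ss ! Suc j)"
proof
  fix v assume "v \<in> C1 \<inter> C2"
  then show "v \<in> fst (ss ! j) \<inter> fst (ss ! Suc j)"
    using node_of_Qblock_vertex[of j C1 v] node_of_Qblock_vertex[OF assms(1,3), of v] assms
    by auto
qed

lemma Qblock_nonempty:
  assumes "j < length ss"
  shows "Qblock (ss ! j) \<noteq> []"
proof (cases "snd (ss ! j)")
  case (Some c)
  then have "px @ [j] \<in> positions T" "node_at T (px @ [j]) = c"
    using below_Qnode[of j "[]"] assms by (auto simp: Cons_in_positions_QNode node_at_QNode_Cons)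
  then show ?thesis
    using cliques_node_at_nonempty Some by (auto simp: Qblock_def)
qed (simp add: Qblock_def)

lemma Qnode_cut_between:
  assumes "1 \<le> c" and "c < length ss"
  obtains A B where "cliques T = A @ B" and "A \<noteq> []" and "B \<noteq> []"
    and "U \<union> sec ss c \<subseteq> last A" and "U \<union> sec ss (Suc c) \<subseteq> hd B"
    and "last A \<inter> hd B \<subseteq> U \<union> (sec ss c \<inter> sec ss (Suc c))"
proof -
  define j where "j = c - 1"
  have j: "Suc j < length ss" and secs: "sec ss c = fst (ss ! j)" "sec ss (Suc c) = fst (ss ! Suc j)"
    using assms by (simp_all add: j_def sec_def)
  let ?xs = "map Qblock ss"
  define A where "A = pre @ map ((\<union>) U) (concat (take (Suc j) ?xs))"
  define B where "B = map ((\<union>) U) (concat (drop (Suc j) ?xs)) @ post"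
  define C1 where "C1 = last (concat (take (Suc j) ?xs))"
  define C2 where "C2 = hd (concat (drop (Suc j) ?xs))"
  have "concat ?xs = concat (take (Suc j) ?xs) @ concat (drop (Suc j) ?xs)"
    by (metis append_take_drop_id concat_append)
  then have split: "cliques T = A @ B"
    unfolding A_def B_def cliques_around_Qnode by simp
  have "concat (take (Suc j) ?xs) \<noteq> []" and C1: "C1 \<in> set (Qblock (ss ! j))"
    using last_concat_take_Suc[of j ?xs] Qblock_nonempty j by (simp_all add: C1_def)
  then have A: "A \<noteq> []" "last A = U \<union> C1"
    by (simp_all add: A_def C1_def last_map)
  have "concat (drop (Suc j) ?xs) \<noteq> []" and C2: "C2 \<in> set (Qblock (ss ! Suc j))"
    using hd_concat_drop[of "Suc j" ?xs] Qblock_nonempty j by (simp_all add: C2_def)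
  then have B: "B \<noteq> []" "hd B = U \<union> C2"
    by (simp_all add: B_def C2_def hd_map)
  show ?thesis
  proof (rule that[OF split A(1) B(1)])
    show "U \<union> sec ss c \<subseteq> last A"
      using section_subset_Qblock[OF C1] A(2) unfolding secs by blast
    show "U \<union> sec ss (Suc c) \<subseteq> hd B"
      using section_subset_Qblock[OF C2] B(2) unfolding secs by blast
    show "last A \<inter> hd B \<subseteq> U \<union> (sec ss c \<inter> sec ss (Suc c))"
      using adjacent_Qblocks_shared[OF j C1 C2] A(2) B(2) unfolding secs by blast
  qed
qed

lemma Qnode_cut_before:
  obtains A B where "cliques T = A @ B" and "B \<noteq> []" and "U \<union> sec ss 1 \<subseteq> hd B"
    and "A \<noteq> [] \<Longrightarrow> last A \<inter> hd B \<subseteq> U"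
proof -
  have len: "0 < length ss" using length_sections_ge_3 by linarith
  define B where "B = map ((\<union>) U) (concat (map Qblock ss)) @ post"
  define C where "C = hd (concat (map Qblock ss))"
  have "concat (map Qblock ss) \<noteq> []" and C: "C \<in> set (Qblock (ss ! 0))"
    using hd_concat_drop[of 0 "map Qblock ss"] Qblock_nonempty[OF len] len by (simp_all add: C_def)
  then have B: "B \<noteq> []" "hd B = U \<union> C"
    by (simp_all add: B_def C_def hd_map)
  show ?thesis
  proof (rule that)
    show "cliques T = pre @ B"
      using cliques_around_Qnode by (simp add: B_def)
    show "U \<union> sec ss 1 \<subseteq> hd B"
      using section_subset_Qblock[OF C] B(2) by (auto simp: sec_def)
    show "last pre \<inter> hd B \<subseteq> U" if "pre \<noteq> []"
      using outer_clique_disjoint_Qblock[OF _ len C, of "last pre"] that B(2) by auto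
  qed (fact B(1))
qed

lemma Qnode_cut_after:
  obtains A B where "cliques T = A @ B" and "A \<noteq> []" and "U \<union> sec ss (length ss) \<subseteq> last A"
    and "B \<noteq> [] \<Longrightarrow> last A \<inter> hd B \<subseteq> U"
proof -
  have len: "length ss - 1 < length ss" and n: "Suc (length ss - 1) = length ss"
    using length_sections_ge_3 by linarith+
  define A where "A = pre @ map ((\<union>) U) (concat (map Qblock ss))"
  define C where "C = last (concat (map Qblock ss))"
  have "concat (map Qblock ss) \<noteq> []" and C: "C \<in> set (Qblock (ss ! (length ss - 1)))"
    using last_concat_take_Suc[of "length ss - 1" "map Qblock ss"] Qblock_nonempty[OF len] len
    by (simp_all add: C_def n)
  then have A: "A \<noteq> []" "last A = U \<union> C"
    by (simp_all add: A_def C_def last_map)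
  show ?thesis
  proof (rule that)
    show "cliques T = A @ post"
      using cliques_around_Qnode by (simp add: A_def)
    show "U \<union> sec ss (length ss) \<subseteq> last A"
      using section_subset_Qblock[OF C] A(2) by (auto simp: sec_def)
    show "last A \<inter> hd post \<subseteq> U" if "post \<noteq> []"
      using outer_clique_disjoint_Qblock[OF _ len C, of "hd post"] that A(2) by auto
  qed (fact A(1))
qed

lemma Qnode_cut_for_section:
  assumes x: "x \<in> node_vs (QNode ss)"
    and cut: "(\<exists>b. 1 < b \<and> b \<le> lidx ss x \<and> sec ss a - {x} \<subseteq> sec ss b \<and>
              sec ss (b - 1) \<inter> sec ss b \<subseteq> sec ss a)
       \<or> (\<exists>b. ridx ss x \<le> b \<and> b < length ss \<and> sec ss a - {x} \<subseteq> sec ss b \<and>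
              sec ss b \<inter> sec ss (b + 1) \<subseteq> sec ss a)
       \<or> sec ss a - {x} \<subseteq> sec ss 1
       \<or> sec ss a - {x} \<subseteq> sec ss (length ss)"
  obtains A B where "cliques T = A @ B" and "fits_between ((U \<union> sec ss a) - {x}) A B"
proof -
  have xU: "x \<notin> U" using Qnode_vertex_notin_U[OF x] .
  from cut show ?thesis
  proof (elim disjE exE conjE)
    fix b assume b: "1 < b" "b \<le> lidx ss x" and sub: "sec ss a - {x} \<subseteq> sec ss b"
      and shared: "sec ss (b - 1) \<inter> sec ss b \<subseteq> sec ss a"
    obtain c where c: "b = Suc c" using b(1) by (cases b) auto
    have c_bounds: "1 \<le> c" "c < length ss"
      using b c lidx_le_length[OF x] by simp_all
    have x_c: "x \<notin> sec ss c"
      using notin_sec_below_lidx b c c_bounds by simp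
    obtain A B where AB: "cliques T = A @ B" "A \<noteq> []" "B \<noteq> []"
      "U \<union> sec ss c \<subseteq> last A" "U \<union> sec ss (Suc c) \<subseteq> hd B"
      "last A \<inter> hd B \<subseteq> U \<union> (sec ss c \<inter> sec ss (Suc c))"
      by (rule Qnode_cut_between[OF c_bounds])
    have "fits_between ((U \<union> sec ss a) - {x}) A B"
      by (rule fits_between_hdI) (use AB sub shared c xU x_c in auto)
    with AB(1) show ?thesis by (rule that)
  next
    fix b assume b: "ridx ss x \<le> b" "b < length ss" and sub: "sec ss a - {x} \<subseteq> sec ss b"
      and shared: "sec ss b \<inter> sec ss (b + 1) \<subseteq> sec ss a"
    have b1: "1 \<le> b" using b one_le_ridx[OF x] by simp
    have x_b: "x \<notin> sec ss (Suc b)"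
      using notin_sec_above_ridx b by simp
    obtain A B where AB: "cliques T = A @ B" "A \<noteq> []" "B \<noteq> []"
      "U \<union> sec ss b \<subseteq> last A" "U \<union> sec ss (Suc b) \<subseteq> hd B"
      "last A \<inter> hd B \<subseteq> U \<union> (sec ss b \<inter> sec ss (Suc b))"
      by (rule Qnode_cut_between[OF b1 b(2)])
    have "fits_between ((U \<union> sec ss a) - {x}) A B"
      by (rule fits_between_lastI) (use AB sub shared xU x_b in auto)
    with AB(1) show ?thesis by (rule that)
  next
    assume sub: "sec ss a - {x} \<subseteq> sec ss 1"
    obtain A B where AB: "cliques T = A @ B" "B \<noteq> []" "U \<union> sec ss 1 \<subseteq> hd B"
      "A \<noteq> [] \<Longrightarrow> last A \<inter> hd B \<subseteq> U"
      by (rule Qnode_cut_before) blast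
    have "fits_between ((U \<union> sec ss a) - {x}) A B"
      by (rule fits_between_hdI) (use AB sub xU in auto)
    with AB(1) show ?thesis by (rule that)
  next
    assume sub: "sec ss a - {x} \<subseteq> sec ss (length ss)"
    obtain A B where AB: "cliques T = A @ B" "A \<noteq> []" "U \<union> sec ss (length ss) \<subseteq> last A"
      "B \<noteq> [] \<Longrightarrow> last A \<inter> hd B \<subseteq> U"
      by (rule Qnode_cut_after) blast
    have "fits_between ((U \<union> sec ss a) - {x}) A B"
      by (rule fits_between_lastI) (use AB sub xU in auto)
    with AB(1) show ?thesis by (rule that)
  qed
qed

lemma unique_clique_of_isolated_subtree_vertex:
  assumes j: "j < length ss" and y: "y \<in> subverts (snd (ss ! j))"
    and isolated: "\<forall>z \<in> subverts (snd (ss ! j)) - {y}. {y, z} \<notin> E"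
    and M: "M \<in> set (cliques T)" "y \<in> M"
  shows "M = insert y (U \<union> fst (ss ! j))"
proof -
  obtain q where y_node: "node T y = px @ j # q"
    using node_of_subtree_vertex[OF j y] .
  have y_inner: "\<not> (y \<in> U \<or> (\<exists>C\<in>set pre \<union> set post. y \<in> C))"
    using node_of_outer_vertex y_node by (auto intro: prefixI)
  then obtain C where C: "C \<in> set (concat (map Qblock ss))" "M = U \<union> C"
    using M cliques_around_Qnode by auto
  then obtain sc where "sc \<in> set ss" "C \<in> set (Qblock sc)"
    by auto
  then obtain k where k: "k < length ss" "C \<in> set (Qblock (ss ! k))"
    by (auto simp: in_set_conv_nth)
  have "y \<in> C"
    using M(2) C(2) y_inner by blast
  then have "k = j"
    using node_of_Qblock_vertex[OF k \<open>y \<in> C\<close>] y_node by auto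
  then obtain c C' where c: "snd (ss ! j) = Some c" "C' \<in> set (cliques c)" "C = fst (ss ! j) \<union> C'"
    using k(2) y by (auto simp: Qblock_def subverts_def split: option.splits)
  have "C' \<subseteq> {y}"
  proof
    fix z assume z: "z \<in> C'"
    have "z \<in> subverts (snd (ss ! j))"
      using cliques_subset_all_verts[OF c(2)] z c(1) by (auto simp: subverts_def)
    moreover have "z \<noteq> y \<longrightarrow> {y, z} \<in> E"
      using M set_cliques z c(3) C(2) by (auto simp: max_cliques_def is_clique_def)
    ultimately show "z \<in> {y}" using isolated by auto
  qed
  then show ?thesis using M(2) C(2) c(3) by auto
qed

end

theorem mainTheorem7:
  fixes n :: nat and E :: "nat set set" and T :: mpq and x y a :: nat
    and ss :: "(nat set \<times> mpq option) list"
  assumes "interval_graph {1..n} E"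
    and "mpq_tree_of {1..n} E T"
    and "{x, y} \<in> E"
    and "over T x y" and "node T x \<noteq> node T y"
    and "almost_rotable T x y"
    and "starts_in_central T x y a"
    and "node_at T (node T x) = QNode ss"
    and "\<forall>z \<in> Vsub ss a - {y}. {y, z} \<notin> E"
    and "(\<exists>b. 1 < b \<and> b \<le> lidx ss x \<and> sec ss a - {x} \<subseteq> sec ss b \<and>
              sec ss (b - 1) \<inter> sec ss b \<subseteq> sec ss a)
       \<or> (\<exists>b. ridx ss x \<le> b \<and> b < length ss \<and> sec ss a - {x} \<subseteq> sec ss b \<and>
              sec ss b \<inter> sec ss (b + 1) \<subseteq> sec ss a)
       \<or> sec ss a - {x} \<subseteq> sec ss 1
       \<or> sec ss a - {x} \<subseteq> sec ss (length ss)"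
  shows "interval_graph {1..n} (E - {{x, y}})"
proof -
  interpret mpq_graph "{1..n}" E T
    by unfold_locales (fact assms(2))
  have graph: "simple_graph {1..n} E"
    using assms(1) unfolding interval_graph_def by blast
  have V: "x \<in> {1..n}" "y \<in> {1..n}"
    using simple_graph_edgeD[OF graph assms(3)] by auto
  have x: "x \<in> node_vs (QNode ss)"
    using node_assigned(2)[OF V(1)] assms(8) by simp
  obtain i q where y_node: "node T y = node T x @ i # q" and a: "a = Suc i"
    by (rule over_starts_in_centralE[OF assms(4,5,7)])
  obtain pre post U where "mpq_Qnode {1..n} E T (node T x) ss pre post U"
    by (rule Qnode_context[OF node_assigned(1)[OF V(1)] assms(8)])
  then interpret Q: mpq_Qnode "{1..n}" E T "node T x" ss pre post U .
  have i: "i < length ss" and y_sub: "y \<in> Vsub ss a"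
    using Q.subtree_vertex_of_node[OF y_node] node_assigned[OF V(2)] a by (auto simp: Vsub_def)
  define Cy where "Cy = insert y (U \<union> sec ss a)"
  have Cy_unique: "M = Cy" if "M \<in> set (cliques T)" "y \<in> M" for M
    using Q.unique_clique_of_isolated_subtree_vertex[OF i _ _ that] y_sub assms(9) a
    by (simp add: Cy_def sec_def Vsub_def)
  obtain My where "My \<in> set (cliques T)" "y \<in> My"
    by (rule vertex_in_clique[OF _ V(2)]) simp
  then have Cy: "Cy \<in> set (cliques T)" "y \<in> Cy"
    using Cy_unique by auto
  obtain A B where AB: "cliques T = A @ B" "fits_between ((U \<union> sec ss a) - {x}) A B"
    by (rule Q.Qnode_cut_for_section[OF x assms(10)])
  have "Cy - {x, y} = (U \<union> sec ss a) - {x}"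
    using Q.subtree_vertex_notin_Qnode[OF y_node] fst_nth_subset_node_vs[OF i] a
    by (auto simp: Cy_def sec_def)
  with AB(2) have fits: "fits_between (Cy - {x, y}) A B"
    by simp
  show ?thesis
    by (rule interval_graph_delete_edge[OF graph vertex_consecutive_cliques set_cliques assms(3)
          Cy Cy_unique AB(1) fits])
qed

end
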